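(* Let $\Gamma$ be a compact abelian group satisfying (G1)–(G3), and let $\Lambda$ be the topological $\mathbb{N}^{\times}$-graph with vertex set $\Gamma$, morphisms $(a,g)$ ($a\in\mathbb{N}^{\times}$, $g\in\Gamma$), $r(a,g)=g$, $s(a,g)=g^a$, $d(a,g)=a$ and composition $(a,g)(b,g^a)=(ab,g)$. (1) For $g\in\Gamma$ define $\mu_g:\Omega_{\mathbb{N}^{\times}}\to\Lambda$ by $\mu_g(a,b)=(a^{-1}b,g^a)$. Then $\mu_g\in\Lambda^\infty$, and for every $\beta\in\Lambda^\infty$ we have $\beta=\mu_{r(\beta)}$. (2) $\Lambda$ is aperiodic if and only if $\operatorname{int}(\operatorname{Tor}\Gamma)=\emptyset$.
   Context: $\mathbb{N}^{\times}$ is the multiplicative semigroup of positive integers; $\Gamma$ is written multiplicatively, $\omega_a(g)=g^a$, and (G1) $\omega_a(\Gamma)$ has finite index, (G2) $\ker\omega_a$ is finite, (G3) $|\ker\omega_{ab}|=|\ker\omega_a||\ker\omega_b|$ for all $a,b\in\mathbb{N}^{\times}$. $\Lambda^1=\Gamma$ denotes the vertex set; each $\{(a,g):g\in\Gamma\}$ is a compact open copy of $\Gamma$. $\Omega_{\mathbb{N}^{\times}}$ is the $\mathbb{N}^{\times}$-graph with vertex set $\mathbb{N}^{\times}$ and morphisms the pairs $(a,b)$ with $a\mid b$, range $a$, source $b$, degree $a^{-1}b$, composition $(a,b)(b,c)=(a,c)$. An infinite path with range $v$ is a degree-preserving continuous functor $\mu:\Omega_{\mathbb{N}^{\times}}\to\Lambda$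 with $\mu(1)=v$; $\Lambda^\infty$ is the set of infinite paths and $r(\mu)=\mu(1)$. For $m\in\mathbb{N}^{\times}$, $\tau^m(\mu)(a,b):=\mu(ma,mb)$. $\Lambda$ is aperiodic if for every nonempty open set $V\subseteq\Lambda^1$ there is $\mu\in\Lambda^\infty$ with $r(\mu)\in V$ such that $m\neq n$ implies $\tau^m(\mu)\neq\tau^n(\mu)$. $\operatorname{Tor}\Gamma$ is the subgroup of elements of finite order. *)

theory Defs
  imports "HOL-Analysis.Analysis"
begin

text \<open>The compact abelian group Gamma is written additively here (type class
  topological_ab_group_add); the paper's power g^a becomes gpow a g = g + ... + g.\<close>

definition gpow :: "nat \<Rightarrow> 'a::comm_monoid_add \<Rightarrow> 'a" where
  "gpow a g = (\<Sum>i<a. g)"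

definition kerw :: "nat \<Rightarrow> 'a::comm_monoid_add set" where
  "kerw a = {g. gpow a g = 0}"

definition finite_index :: "'a::ab_group_add set \<Rightarrow> bool" where
  "finite_index H \<longleftrightarrow> finite ((\<lambda>g. (\<lambda>h. g + h) ` H) ` UNIV)"

definition Tor :: "'a::comm_monoid_add set" where
  "Tor = {g. \<exists>n>0. gpow n g = 0}"

definition lam_r :: "nat \<times> 'a \<Rightarrow> 'a" where "lam_r x = snd x"
definition lam_s :: "nat \<times> 'a::comm_monoid_add \<Rightarrow> 'a" where "lam_s x = gpow (fst x) (snd x)"
definition lam_d :: "nat \<times> 'a \<Rightarrow> nat" where "lam_d x = fst x"
definition lam_comp :: "nat \<times> 'a \<Rightarrow> nat \<times> 'a \<Rightarrow> nat \<times> 'a" where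
  "lam_comp x y = (fst x * fst y, snd x)"

definition Om_dom :: "nat \<Rightarrow> nat \<Rightarrow> bool" where
  "Om_dom a b \<longleftrightarrow> 0 < a \<and> a dvd b"

text \<open>Infinite paths: degree-preserving functors Omega -> Lambda, represented as
  functions on the morphisms (a,b) of Omega (undefined outside). Omega is discrete,
  so continuity is automatic.\<close>
definition inf_paths :: "(nat \<Rightarrow> nat \<Rightarrow> nat \<times> 'a::comm_monoid_add) set" where
  "inf_paths = {\<mu>.
     (\<forall>a b. \<not> Om_dom a b \<longrightarrow> \<mu> a b = undefined) \<and>
     (\<forall>a b. Om_dom a b \<longrightarrow> lam_d (\<mu> a b) = b div a) \<and>
     (\<forall>a b c. Om_dom a b \<and> Om_dom b c \<longrightarrow>
        lam_s (\<mu> a b) = lam_r (\<mu> b c) \<and> \<mu> a c = lam_comp (\<mu> a b) (\<mu> b c))}"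

definition path_r :: "(nat \<Rightarrow> nat \<Rightarrow> nat \<times> 'a) \<Rightarrow> 'a" where
  "path_r \<mu> = lam_r (\<mu> 1 1)"

definition tau :: "nat \<Rightarrow> (nat \<Rightarrow> nat \<Rightarrow> nat \<times> 'a) \<Rightarrow> (nat \<Rightarrow> nat \<Rightarrow> nat \<times> 'a)" where
  "tau m \<mu> = (\<lambda>a b. if Om_dom a b then \<mu> (m * a) (m * b) else undefined)"

definition mu_g :: "'a::comm_monoid_add \<Rightarrow> (nat \<Rightarrow> nat \<Rightarrow> nat \<times> 'a)" where
  "mu_g g = (\<lambda>a b. if Om_dom a b then (b div a, gpow a g) else undefined)"

definition aperiodic :: "(nat \<Rightarrow> nat \<Rightarrow> nat \<times> 'a::{comm_monoid_add,topological_space}) set \<Rightarrow> bool" where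
  "aperiodic P \<longleftrightarrow> (\<forall>V. open V \<and> V \<noteq> {} \<longrightarrow>
     (\<exists>\<mu>\<in>P. path_r \<mu> \<in> V \<and>
        (\<forall>m n. 0 < m \<and> 0 < n \<and> m \<noteq> n \<longrightarrow> tau m \<mu> \<noteq> tau n \<mu>)))"

end

theory Submission
  imports Defs
begin

text \<open>An infinite path is determined by its range: functoriality along 1 | a | b forces
  \<open>\<beta>(a,b) = (b/a, g^a)\<close> with \<open>g = r(\<beta>)\<close>, so \<open>\<Lambda>\<^sup>\<infinity>\<close> is a copy of \<open>\<Gamma>\<close>.  The shifted path
  \<open>\<tau>\<^sup>m(\<mu>\<^sub>g)\<close> only records the vertices \<open>g^(ma)\<close>, so \<open>\<tau>\<^sup>m(\<mu>\<^sub>g) = \<tau>\<^sup>n(\<mu>\<^sub>g)\<close> for some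
  \<open>m \<noteq> n\<close> exactly when \<open>g^m = g^n\<close>, i.e. when \<open>g\<close> is a torsion element.  Hence \<open>\<Lambda>\<close> is
  aperiodic iff every nonempty open set contains a non-torsion element.\<close>

lemma gpow_0 [simp]: "gpow 0 g = 0"
  by (simp add: gpow_def)

lemma gpow_Suc: "gpow (Suc n) g = g + gpow n g"
  by (simp add: gpow_def add.commute)

lemma gpow_1 [simp]: "gpow (Suc 0) g = g"
  by (simp add: gpow_def)

lemma gpow_add: "gpow (m + n) g = gpow m g + gpow n g"
  by (induction m) (auto simp: gpow_Suc add.assoc)

lemma gpow_mult: "gpow (m * n) g = gpow n (gpow m g)"
  by (induction n) (auto simp: gpow_Suc gpow_add add.commute)

lemma Tor_iff_gpow_eq:
  fixes g :: "'a::cancel_comm_monoid_add"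
  shows "g \<in> Tor \<longleftrightarrow> (\<exists>m n. 0 < m \<and> 0 < n \<and> m \<noteq> n \<and> gpow m g = gpow n g)"
proof
  assume "g \<in> Tor"
  then obtain k where "k > 0" "gpow k g = 0"
    by (auto simp: Tor_def)
  then have "gpow (Suc k) g = gpow 1 g"
    by (simp add: gpow_Suc)
  with \<open>k > 0\<close> show "\<exists>m n. 0 < m \<and> 0 < n \<and> m \<noteq> n \<and> gpow m g = gpow n g"
    by (intro exI[of _ "Suc k"] exI[of _ 1]) simp
next
  assume "\<exists>m n. 0 < m \<and> 0 < n \<and> m \<noteq> n \<and> gpow m g = gpow n g"
  then obtain m n where "0 < m" "m < n" "gpow m g = gpow n g"
    by (metis linorder_neqE_nat)
  then have "gpow (n - m) g + gpow m g = gpow m g"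
    by (metis gpow_add le_add_diff_inverse2 less_imp_le)
  with \<open>m < n\<close> show "g \<in> Tor"
    unfolding Tor_def by (auto intro!: exI[of _ "n - m"])
qed

lemma Om_dom_trans: "Om_dom a b \<Longrightarrow> Om_dom b c \<Longrightarrow> Om_dom a c"
  by (auto simp: Om_dom_def dest: dvd_trans)

lemma mu_g_in_inf_paths: "mu_g g \<in> inf_paths"
proof -
  have "gpow (b div a) (gpow a g) = gpow b g" if "Om_dom a b" for a b
    using that by (metis Om_dom_def dvd_mult_div_cancel gpow_mult)
  moreover have "c div a = b div a * (c div b)" if "Om_dom a b" "Om_dom b c" for a b c :: nat
    using that by (auto simp: Om_dom_def elim!: dvdE)
  ultimately show ?thesis
    unfolding inf_paths_def mu_g_def lam_d_def lam_s_def lam_r_def lam_comp_def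
    by (auto dest: Om_dom_trans)
qed

lemma path_r_mu_g [simp]: "path_r (mu_g g) = g"
  by (simp add: path_r_def mu_g_def lam_r_def Om_dom_def)

lemma inf_paths_eq_mu_g_path_r:
  assumes "\<beta> \<in> inf_paths"
  shows "\<beta> = mu_g (path_r \<beta>)"
proof (intro ext)
  fix a b
  note path = assms[unfolded inf_paths_def, simplified]
  show "\<beta> a b = mu_g (path_r \<beta>) a b"
  proof (cases "Om_dom a b")
    case False
    then show ?thesis
      using path by (simp add: mu_g_def)
  next
    case True
    then have "Om_dom 1 a" "Om_dom 1 1"
      by (auto simp: Om_dom_def)
    then have "snd (\<beta> 1 a) = snd (\<beta> 1 1)" and "fst (\<beta> 1 a) = a"
      and "snd (\<beta> a b) = lam_s (\<beta> 1 a)"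
      using path True by (metis lam_comp_def snd_conv, metis lam_d_def div_by_1, metis lam_r_def)
    moreover have "fst (\<beta> a b) = b div a"
      using path True by (metis lam_d_def)
    ultimately show ?thesis
      using True by (simp add: mu_g_def path_r_def lam_r_def lam_s_def prod_eq_iff)
  qed
qed

lemma tau_mu_g:
  "0 < m \<Longrightarrow> tau m (mu_g g) = (\<lambda>a b. if Om_dom a b then (b div a, gpow (m * a) g) else undefined)"
  by (auto simp: tau_def mu_g_def Om_dom_def fun_eq_iff)

lemma tau_mu_g_eq_iff:
  assumes "0 < m" "0 < n"
  shows "tau m (mu_g g) = tau n (mu_g g) \<longleftrightarrow> gpow m g = gpow n g"
proof
  assume "tau m (mu_g g) = tau n (mu_g g)"
  then have "snd (tau m (mu_g g) 1 1) = snd (tau n (mu_g g) 1 1)"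
    by simp
  then show "gpow m g = gpow n g"
    using assms by (simp add: tau_mu_g Om_dom_def)
next
  assume "gpow m g = gpow n g"
  then have "gpow (m * a) g = gpow (n * a) g" for a
    by (simp add: gpow_mult)
  then show "tau m (mu_g g) = tau n (mu_g g)"
    using assms by (simp add: tau_mu_g fun_eq_iff)
qed

lemma aperiodic_path_iff_not_Tor:
  fixes \<beta> :: "nat \<Rightarrow> nat \<Rightarrow> nat \<times> 'a::cancel_comm_monoid_add"
  assumes "\<beta> \<in> inf_paths"
  shows "(\<forall>m n. 0 < m \<and> 0 < n \<and> m \<noteq> n \<longrightarrow> tau m \<beta> \<noteq> tau n \<beta>) \<longleftrightarrow> path_r \<beta> \<notin> Tor"
  using inf_paths_eq_mu_g_path_r[OF assms] tau_mu_g_eq_iff Tor_iff_gpow_eq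
  by metis

lemma interior_eq_empty_iff: "interior S = {} \<longleftrightarrow> (\<forall>V. open V \<and> V \<noteq> {} \<longrightarrow> \<not> V \<subseteq> S)"
  by (metis interior_maximal interior_subset open_interior subset_empty)

lemma aperiodic_inf_paths_iff:
  "aperiodic (inf_paths :: (nat \<Rightarrow> nat \<Rightarrow> nat \<times> 'a::{cancel_comm_monoid_add,topological_space}) set)
     \<longleftrightarrow> interior (Tor :: 'a set) = {}"
proof -
  have "(\<exists>\<beta>\<in>(inf_paths :: (nat \<Rightarrow> nat \<Rightarrow> nat \<times> 'a) set). path_r \<beta> \<in> V \<and>
          (\<forall>m n. 0 < m \<and> 0 < n \<and> m \<noteq> n \<longrightarrow> tau m \<beta> \<noteq> tau n \<beta>))
        \<longleftrightarrow> \<not> V \<subseteq> Tor" for V :: "'a set"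
  proof
    show "\<not> V \<subseteq> Tor" if "\<exists>\<beta>\<in>inf_paths. path_r \<beta> \<in> V \<and>
          (\<forall>m n. 0 < m \<and> 0 < n \<and> m \<noteq> n \<longrightarrow> tau m \<beta> \<noteq> tau n \<beta>)"
    proof -
      from that obtain \<beta> where "\<beta> \<in> inf_paths" "path_r \<beta> \<in> V"
        and "\<forall>m n. 0 < m \<and> 0 < n \<and> m \<noteq> n \<longrightarrow> tau m \<beta> \<noteq> tau n \<beta>"
        by blast
      then have "path_r \<beta> \<notin> Tor"
        by (simp add: aperiodic_path_iff_not_Tor)
      with \<open>path_r \<beta> \<in> V\<close> show ?thesis
        by blast
    qed
    show "\<exists>\<beta>\<in>inf_paths. path_r \<beta> \<in> V \<and>
          (\<forall>m n. 0 < m \<and> 0 < n \<and> m \<noteq> n \<longrightarrow> tau m \<beta> \<noteq> tau n \<beta>)" if "\<not> V \<subseteq> Tor"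
    proof -
      from that obtain g where "g \<in> V" "g \<notin> Tor"
        by blast
      then show ?thesis
        using aperiodic_path_iff_not_Tor[OF mu_g_in_inf_paths, of g]
        by (intro bexI[OF _ mu_g_in_inf_paths]) simp
    qed
  qed
  then show ?thesis
    by (simp add: aperiodic_def interior_eq_empty_iff)
qed

theorem lemma3p6:
  fixes x0 :: "'a::{topological_ab_group_add, t2_space}"
  assumes compact: "compact (UNIV :: 'a set)"
    and G1: "\<forall>a>0. finite_index (range (gpow a :: 'a \<Rightarrow> 'a))"
    and G2: "\<forall>a>0. finite (kerw a :: 'a set)"
    and G3: "\<forall>a b. 0 < a \<and> 0 < b \<longrightarrow>
               card (kerw (a * b) :: 'a set) = card (kerw a :: 'a set) * card (kerw b :: 'a set)"
  shows "((\<forall>g::'a. mu_g g \<in> inf_paths) \<and>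
         (\<forall>\<beta>\<in>(inf_paths :: (nat \<Rightarrow> nat \<Rightarrow> nat \<times> 'a) set). \<beta> = mu_g (path_r \<beta>))) \<and>
         (aperiodic (inf_paths :: (nat \<Rightarrow> nat \<Rightarrow> nat \<times> 'a) set) \<longleftrightarrow>
         interior (Tor :: 'a set) = {})"
  using mu_g_in_inf_paths inf_paths_eq_mu_g_path_r aperiodic_inf_paths_iff by (intro conjI) blast+

end
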